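(* Let $n\ge3$, $1<k<n/2$, $p>\frac{nk}{n-2k}$, and let $u$ be a regular solution of (1.6). If $u(r)r^{\frac{2k}{p-k}}\to0$ as $r\to\infty$, then $u(r)=O(r^{\frac{2k-n}{k}})$ as $r\to\infty$.
   Context: Problem (1.6) is: given $\rho>0$, find $u$ with $-\tfrac{1}{k}C_{n-1}^{k-1}(r^{n-k}|u'|^{k-1}u')'=r^{n-1}u^{p}$, $u(r)>0$ for all $r>0$, $u'(0)=0$, $u(0)=\rho$, where $C_{n-1}^{k-1}$ is the binomial coefficient. A solution $u$ of (1.6) is regular if $x\mapsto u(|x|)$ belongs to $C^2(\mathbb{R}^n)$. *)

theory Defs
  imports "HOL-Analysis.Analysis" "HOL-Library.Landau_Symbols"
begin

definition C2_fun :: "('a::euclidean_space \<Rightarrow> real) \<Rightarrow> bool" where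
  "C2_fun f \<longleftrightarrow> (\<exists>g H. (\<forall>x. (f has_derivative (\<lambda>h. g x \<bullet> h)) (at x)) \<and>
      (\<forall>x. (g has_derivative H x) (at x)) \<and>
      (\<forall>i\<in>Basis. \<forall>j\<in>Basis. continuous_on UNIV (\<lambda>x. H x i \<bullet> j)))"

text \<open>Problem (1.6): radial k-Hessian equation with data rho. The ODE is required for r > 0;
  u' denotes the derivative of u. Values of u for r < 0 are irrelevant.\<close>
definition problem_1_6 :: "nat \<Rightarrow> nat \<Rightarrow> real \<Rightarrow> real \<Rightarrow> (real \<Rightarrow> real) \<Rightarrow> bool" where
  "problem_1_6 n k p \<rho> u \<longleftrightarrow>
     (\<forall>r>0. u r > 0) \<and>
     (u has_real_derivative 0) (at 0 within {0..}) \<and>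
     u 0 = \<rho> \<and>
     (\<forall>r>0. u differentiable (at r) \<and>
        (\<exists>D. ((\<lambda>s. s ^ (n - k) * \<bar>deriv u s\<bar> ^ (k - 1) * deriv u s) has_real_derivative D) (at r) \<and>
             - (1 / real k) * real ((n - 1) choose (k - 1)) * D = r ^ (n - 1) * (u r) powr p))"

definition regular_solution_1_6 :: "'n::finite itself \<Rightarrow> nat \<Rightarrow> real \<Rightarrow> real \<Rightarrow> (real \<Rightarrow> real) \<Rightarrow> bool" where
  "regular_solution_1_6 _ k p \<rho> u \<longleftrightarrow>
     problem_1_6 CARD('n) k p \<rho> u \<and> C2_fun (\<lambda>x::real^'n. u (norm x))"

end

theory Submission
  imports Defs
begin

text \<open>
  Once u is decreasing, everything is governed by the logarithmic slope Q = -r u'/u: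
  if Q < \<alpha> = 2k/(p-k) held eventually, u r^\<alpha> would increase and could not tend to 0.
  The quantity Z = -r^(2k-n) u^(-k) r^(n-k) |u'|^(k-1) u' equals Q^k and, by the ODE, satisfies
  r Z' = c r^2k u^(p-k) + (2k - n) Z + k Z Q, whose forcing term tends to 0 by the decay
  hypothesis. For \<alpha> < \<gamma> < \<beta> = (n-2k)/k, a barrier argument shows that Z cannot stay below
  \<gamma>^k without being driven below \<alpha>^k, so Q > \<gamma> eventually. Choosing \<gamma> > n/p gives u = O(r^-\<gamma>),
  so the derivative c r^(n-1) u^p of the flux r^(n-k) |u'|^k is integrable at infinity, the flux is
  bounded, |u'| = O(r^-(\<beta>+1)), and integrating from infinity yields u = O(r^-\<beta>).
\<close>

lemma DERIV_neg_at_level_imp_le: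
  fixes f f' :: "real \<Rightarrow> real"
  assumes der: "\<And>t. a \<le> t \<Longrightarrow> (f has_real_derivative f' t) (at t)"
    and neg: "\<And>t. a \<le> t \<Longrightarrow> f t = b \<Longrightarrow> f' t < 0"
    and "f a \<le> b" and "a \<le> t"
  shows "f t \<le> b"
proof (rule ccontr)
  assume "\<not> f t \<le> b"
  hence ft: "b < f t" by simp
  have cont: "continuous_on {a..t} f"
    by (intro DERIV_atLeastAtMost_imp_continuous_on) (use der in auto)
  define S where "S = {a..t} \<inter> f -` {..b}"
  have "closed S" unfolding S_def
    by (rule continuous_closed_preimage[OF cont]) auto
  moreover have "a \<in> S" "bdd_above S" using assms(3,4) by (auto simp: S_def bdd_above_def)
  ultimately have "Sup S \<in> S" using closed_contains_Sup by blast
  define s where "s = Sup S"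
  have ub: "\<And>x. x \<in> S \<Longrightarrow> x \<le> s" using \<open>bdd_above S\<close> by (simp add: s_def cSup_upper)
  have s: "a \<le> s" "s \<le> t" "f s \<le> b" using \<open>Sup S \<in> S\<close> by (auto simp: S_def s_def)
  \<comment> \<open>the last point of [a, t] where f is at most b is a point where f crosses b upwards\<close>
  have "continuous_on {s..t} f" using cont s by (auto intro: continuous_on_subset)
  then obtain x where x: "s \<le> x" "x \<le> t" "f x = b" using IVT'[of f s b t] s ft by auto
  hence "x = s" using ub[of x] s by (force simp: S_def)
  hence fs: "f s = b" using x by simp
  hence "s < t" using s ft by (cases "s = t") auto
  obtain d where d: "0 < d" "\<And>h. 0 < h \<Longrightarrow> h < d \<Longrightarrow> f (s + h) < f s"
    using DERIV_neg_dec_right[OF der[OF s(1)] neg[OF s(1) fs]] by blast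
  define h where "h = min (d / 2) ((t - s) / 2)"
  have "h \<le> d / 2" "h \<le> (t - s) / 2" unfolding h_def by (rule min.cobounded1, rule min.cobounded2)
  moreover have "0 < h" using d(1) \<open>s < t\<close> by (simp add: h_def)
  ultimately have h: "0 < h" "h < d" "s + h \<le> t" using d(1) \<open>s < t\<close> by (simp_all add: field_simps)
  hence "s + h \<in> S" using d(2)[OF h(1,2)] fs s by (auto simp: S_def)
  with ub h(1) show False by fastforce
qed

lemma has_real_derivative_mult_powr:
  assumes "0 < x" and "(f has_real_derivative f') (at x)"
  shows "((\<lambda>t. f t * t powr g) has_real_derivative x powr (g - 1) * (g * f x + x * f')) (at x)"
proof -
  have "x powr g = x * x powr (g - 1)" using assms(1) by (simp add: powr_diff)
  then show ?thesis
    using DERIV_mult'[OF assms(2) has_real_derivative_powr[OF assms(1), of g]]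
    by (simp add: algebra_simps)
qed

lemma DERIV_nonneg_imp_not_tendsto_0:
  fixes f f' :: "real \<Rightarrow> real"
  assumes "\<forall>\<^sub>F x in at_top. (f has_real_derivative f' x) (at x) \<and> 0 \<le> f' x"
    and "\<forall>\<^sub>F x in at_top. 0 < f x"
  shows "\<not> (f \<longlongrightarrow> 0) at_top"
proof
  assume lim: "(f \<longlongrightarrow> 0) at_top"
  obtain a where a: "\<And>x. a \<le> x \<Longrightarrow> (f has_real_derivative f' x) (at x) \<and> 0 \<le> f' x \<and> 0 < f x"
    using eventually_conj[OF assms] by (auto simp: eventually_at_top_linorder)
  have "\<forall>\<^sub>F x in at_top. f a \<le> f x" using eventually_ge_at_top[of a]
    by eventually_elim (use a in \<open>auto intro: DERIV_nonneg_imp_nondecreasing\<close>)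
  hence "f a \<le> 0" using tendsto_lowerbound[OF lim] by simp
  with a[of a] show False by simp
qed

lemma DERIV_le_imp_diff_le:
  fixes f g f' g' :: "real \<Rightarrow> real"
  assumes "a \<le> b"
    and "\<And>x. a \<le> x \<Longrightarrow> x \<le> b \<Longrightarrow> (f has_real_derivative f' x) (at x)"
    and "\<And>x. a \<le> x \<Longrightarrow> x \<le> b \<Longrightarrow> (g has_real_derivative g' x) (at x)"
    and "\<And>x. a \<le> x \<Longrightarrow> x \<le> b \<Longrightarrow> f' x \<le> g' x"
  shows "f b - f a \<le> g b - g a"
proof -
  have "(\<lambda>x. f x - g x) b \<le> (\<lambda>x. f x - g x) a"
  proof (rule DERIV_nonpos_imp_nonincreasing[OF assms(1)])
    fix x assume "a \<le> x" "x \<le> b"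
    then show "\<exists>y. ((\<lambda>x. f x - g x) has_real_derivative y) (at x) \<and> y \<le> 0"
      using assms(2-4) by (intro exI[of _ "f' x - g' x"]) (auto intro: DERIV_diff)
  qed
  then show ?thesis by simp
qed

lemma DERIV_ge_same_limit_imp_le:
  fixes f g f' g' :: "real \<Rightarrow> real"
  assumes "\<And>x. a \<le> x \<Longrightarrow> (f has_real_derivative f' x) (at x)"
    and "\<And>x. a \<le> x \<Longrightarrow> (g has_real_derivative g' x) (at x)"
    and "\<And>x. a \<le> x \<Longrightarrow> g' x \<le> f' x"
    and "(f \<longlongrightarrow> L) at_top" and "(g \<longlongrightarrow> L) at_top"
  shows "f a \<le> g a"
proof -
  have "\<forall>\<^sub>F x in at_top. g x - f x \<le> g a - f a"
    using eventually_ge_at_top[of a]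
    by eventually_elim (use DERIV_le_imp_diff_le[of a _ g g' f f'] assms(1-3) in force)
  moreover have "((\<lambda>x. g x - f x) \<longlongrightarrow> L - L) at_top"
    using assms(4,5) by (intro tendsto_diff)
  ultimately have "L - L \<le> g a - f a" by (intro tendsto_upperbound) auto
  then show ?thesis by simp
qed

definition radial_flux :: "nat \<Rightarrow> nat \<Rightarrow> (real \<Rightarrow> real) \<Rightarrow> real \<Rightarrow> real" where
  "radial_flux n k u r = r ^ (n - k) * \<bar>deriv u r\<bar> ^ (k - 1) * deriv u r"

text \<open>
  The ODE of (1.6) on (0, \<infinity>) with the constant k / C(n-1, k-1) replaced by any c > 0.
\<close>
locale supercritical_radial_solution =
  fixes n k :: nat and p c :: real and u :: "real \<Rightarrow> real"
  assumes k_gt_1: "1 < k" and two_k_less_n: "2 * k < n"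
    and p_supercritical: "real n * real k < p * (real n - 2 * real k)"
    and c_pos: "0 < c"
    and u_pos: "\<And>r. 0 < r \<Longrightarrow> 0 < u r"
    and u_deriv: "\<And>r. 0 < r \<Longrightarrow> (u has_real_derivative deriv u r) (at r)"
    and flux_deriv: "\<And>r. 0 < r \<Longrightarrow>
      (radial_flux n k u has_real_derivative - (c * r ^ (n - 1) * u r powr p)) (at r)"
    and decay: "((\<lambda>r. u r * r powr (2 * real k / (p - real k))) \<longlongrightarrow> 0) at_top"
begin

definition alpha :: real where "alpha = 2 * real k / (p - real k)"

definition beta :: real where "beta = (real n - 2 * real k) / real k"

lemma n_minus_2k_pos: "0 < real n - 2 * real k"
  using two_k_less_n by linarith

lemma p_gt_k: "real k < p"
proof (rule mult_right_less_imp_less)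
  have "real k * (real n - 2 * real k) < real n * real k"
    using k_gt_1 by (simp add: algebra_simps)
  then show "real k * (real n - 2 * real k) < p * (real n - 2 * real k)"
    using p_supercritical by linarith
qed (use n_minus_2k_pos in simp)

lemma p_pos: "0 < p"
  using p_gt_k by linarith

lemma alpha_pos: "0 < alpha"
  using k_gt_1 p_gt_k by (simp add: alpha_def)

lemma beta_pos: "0 < beta"
  using k_gt_1 n_minus_2k_pos by (simp add: beta_def)

lemma k_mult_beta: "real k * beta = real n - 2 * real k"
  using k_gt_1 by (simp add: beta_def)

lemma alpha_less: "alpha < real n / p"
  using p_supercritical p_gt_k p_pos by (simp add: alpha_def field_simps)

lemma less_beta: "real n / p < beta"
  using p_supercritical p_pos k_gt_1 by (simp add: beta_def field_simps)

lemma u_tendsto_0: "(u \<longlongrightarrow> 0) at_top"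
proof (rule tendsto_sandwich[OF _ _ tendsto_const decay])
  show "\<forall>\<^sub>F r in at_top. 0 \<le> u r"
    using eventually_gt_at_top[of 0] by eventually_elim (use u_pos in force)
  show "\<forall>\<^sub>F r in at_top. u r \<le> u r * r powr (2 * real k / (p - real k))"
    using eventually_ge_at_top[of 1]
  proof eventually_elim
    case (elim r)
    have "1 \<le> r powr (2 * real k / (p - real k))"
      using elim p_gt_k by (intro ge_one_powr_ge_zero) auto
    then show ?case using u_pos[of r] elim by simp
  qed
qed

lemma radial_flux_sign:
  assumes "0 < r"
  shows "0 < radial_flux n k u r \<longleftrightarrow> 0 < deriv u r"
    and "radial_flux n k u r < 0 \<longleftrightarrow> deriv u r < 0"
proof -
  consider "deriv u r = 0" | "0 < r ^ (n - k) * \<bar>deriv u r\<bar> ^ (k - 1)"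
    using assms by fastforce
  then show "0 < radial_flux n k u r \<longleftrightarrow> 0 < deriv u r"
    and "radial_flux n k u r < 0 \<longleftrightarrow> deriv u r < 0"
    by (cases; simp add: radial_flux_def zero_less_mult_iff[of "_ * _"] mult_less_0_iff[of "_ * _"])+
qed

lemma eventually_deriv_neg: "\<forall>\<^sub>F r in at_top. deriv u r < 0"
proof -
  have "\<exists>r1>0. radial_flux n k u r1 \<le> 0"
  proof (rule ccontr)
    assume "\<not> (\<exists>r1>0. radial_flux n k u r1 \<le> 0)"
    then have pos: "0 < deriv u r" if "0 < r" for r
      using that radial_flux_sign(1)[OF that] by (meson not_le)
    have "\<forall>\<^sub>F r in at_top. (u has_real_derivative deriv u r) (at r) \<and> 0 \<le> deriv u r"
      using eventually_gt_at_top[of 0] by eventually_elim (use u_deriv pos in force)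
    moreover have "\<forall>\<^sub>F r in at_top. 0 < u r"
      using eventually_gt_at_top[of 0] by eventually_elim (rule u_pos)
    ultimately show False using DERIV_nonneg_imp_not_tendsto_0 u_tendsto_0 by blast
  qed
  then obtain r1 where r1: "0 < r1" "radial_flux n k u r1 \<le> 0" by blast
  show ?thesis using eventually_gt_at_top[of r1]
  proof eventually_elim
    case (elim r)
    have "radial_flux n k u r < radial_flux n k u r1"
    proof (rule DERIV_neg_imp_decreasing[OF elim])
      fix x assume "r1 \<le> x"
      with r1(1) have "0 < x" by simp
      then show "\<exists>y. (radial_flux n k u has_real_derivative y) (at x) \<and> y < 0"
        using flux_deriv[of x] c_pos u_pos[of x] by (intro exI conjI) auto
    qed
    then show ?case using radial_flux_sign(2)[of r] elim r1 by simp
  qed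
qed

lemma neg_radial_flux_eq: "deriv u r < 0 \<Longrightarrow> - radial_flux n k u r = r ^ (n - k) * (- deriv u r) ^ k"
proof -
  assume "deriv u r < 0"
  then have "- radial_flux n k u r = r ^ (n - k) * ((- deriv u r) ^ (k - 1) * (- deriv u r))"
    by (simp add: radial_flux_def)
  also have "\<dots> = r ^ (n - k) * (- deriv u r) ^ k"
    using k_gt_1 by (subst power_minus_mult) auto
  finally show ?thesis .
qed

definition log_slope :: "real \<Rightarrow> real" where
  "log_slope r = r * - deriv u r / u r"

text \<open>Equals log_slope r ^ k where u decreases, but is differentiable because only the flux is.\<close>
definition scaled_flux :: "real \<Rightarrow> real" where
  "scaled_flux r = - radial_flux n k u r * r powr (2 * real k - real n) * u r powr (- real k)"

definition forcing :: "real \<Rightarrow> real" where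
  "forcing r = c * r ^ (2 * k) * u r powr (p - real k)"

lemma log_slope_pos: "0 < r \<Longrightarrow> deriv u r < 0 \<Longrightarrow> 0 < log_slope r"
  unfolding log_slope_def using u_pos[of r] by (intro divide_pos_pos mult_pos_pos) auto

lemma scaled_flux_eq_log_slope_power:
  assumes "0 < r" "deriv u r < 0"
  shows "scaled_flux r = log_slope r ^ k"
proof -
  have "r ^ (n - k) = r powr (real n - real k)"
    using assms(1) two_k_less_n by (simp flip: powr_realpow)
  then have rk: "r ^ (n - k) * r powr (2 * real k - real n) = r ^ k"
    using assms(1) by (simp add: powr_realpow flip: powr_add)
  have uk: "u r powr (- real k) = 1 / u r ^ k"
    using u_pos[OF assms(1)] by (simp add: powr_minus powr_realpow divide_inverse)
  have "scaled_flux r = (r ^ (n - k) * r powr (2 * real k - real n)) * (- deriv u r) ^ k / u r ^ k"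
    unfolding scaled_flux_def neg_radial_flux_eq[OF assms(2)] uk by simp
  also have "\<dots> = (r * - deriv u r / u r) ^ k"
    unfolding rk by (simp only: power_divide power_mult_distrib)
  finally show ?thesis by (simp only: log_slope_def)
qed

lemma forcing_tendsto_0: "(forcing \<longlongrightarrow> 0) at_top"
proof -
  have "((\<lambda>r. c * (u r * r powr alpha) powr (p - real k)) \<longlongrightarrow> c * 0) at_top"
  proof (intro tendsto_mult tendsto_const tendsto_zero_powrI)
    show "((\<lambda>r. u r * r powr alpha) \<longlongrightarrow> 0) at_top" using decay by (simp add: alpha_def)
    show "\<forall>\<^sub>F r in at_top. 0 \<le> u r * r powr alpha"
      using eventually_gt_at_top[of 0] by eventually_elim (use u_pos in force)
  qed (use p_gt_k in auto)
  moreover have "\<forall>\<^sub>F r in at_top. c * (u r * r powr alpha) powr (p - real k) = forcing r"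
    using eventually_gt_at_top[of 0]
  proof eventually_elim
    case (elim r)
    have "alpha * (p - real k) = real (2 * k)" using p_gt_k by (simp add: alpha_def)
    then have "r powr (alpha * (p - real k)) = r ^ (2 * k)"
      using elim by (simp only: powr_realpow)
    moreover have "(u r * r powr alpha) powr (p - real k)
        = u r powr (p - real k) * r powr (alpha * (p - real k))"
      using elim u_pos[OF elim] by (simp add: powr_mult powr_powr)
    ultimately show ?case by (simp add: forcing_def)
  qed
  ultimately show ?thesis by (simp add: Lim_transform_eventually)
qed

lemma has_real_derivative_u_mult_powr:
  assumes "0 < r"
  shows "((\<lambda>t. u t * t powr g) has_real_derivative r powr (g - 1) * u r * (g - log_slope r)) (at r)"
proof -
  have "g * u r + r * deriv u r = u r * (g - log_slope r)"
    using u_pos[OF assms] by (simp add: log_slope_def field_simps)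
  then show ?thesis
    using has_real_derivative_mult_powr[OF assms u_deriv[OF assms], of g] by (simp add: mult.assoc)
qed

lemma has_real_derivative_scaled_flux:
  assumes r: "0 < r"
  shows "(scaled_flux has_real_derivative (forcing r + (2 * real k - real n) * scaled_flux r
    + real k * scaled_flux r * log_slope r) / r) (at r)"
proof -
  define e where "e = 2 * real k - real n"
  define F where "F = - radial_flux n k u r"
  have u: "0 < u r" using u_pos[OF r] .
  have d: "(scaled_flux has_real_derivative
      c * r ^ (n - 1) * u r powr p * r powr e * u r powr (- real k)
      + F * (e * r powr (e - 1)) * u r powr (- real k)
      + F * r powr e * (- real k * u r powr (- real k - 1) * deriv u r)) (at r)"
    unfolding scaled_flux_def[abs_def] e_def[symmetric] F_def
    using DERIV_mult'[OF DERIV_mult'[OF DERIV_minus[OF flux_deriv[OF r]]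
          has_real_derivative_powr[OF r, of e]] DERIV_fun_powr[OF u_deriv[OF r] u, of "- real k"]]
    by (rule DERIV_cong) (simp add: algebra_simps)
  have "r * (c * r ^ (n - 1) * u r powr p * r powr e * u r powr (- real k)) = forcing r"
  proof -
    have "r * r ^ (n - 1) = r ^ n"
      using two_k_less_n by (simp flip: power_Suc)
    then have "r * r ^ (n - 1) * r powr e = r ^ (2 * k)"
      using r by (simp add: e_def flip: powr_realpow powr_add)
    moreover have "u r powr p * u r powr (- real k) = u r powr (p - real k)"
      by (simp flip: powr_add)
    moreover have "r * (c * r ^ (n - 1) * u r powr p * r powr e * u r powr (- real k))
        = c * ((r * r ^ (n - 1) * r powr e) * (u r powr p * u r powr (- real k)))"
      by (simp only: mult_ac)
    ultimately show ?thesis by (simp add: forcing_def)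
  qed
  moreover have "r * (F * (e * r powr (e - 1)) * u r powr (- real k)) = e * scaled_flux r"
  proof -
    have "r * (F * (e * r powr (e - 1)) * u r powr (- real k))
        = e * (F * (r * r powr (e - 1)) * u r powr (- real k))"
      by (simp only: mult_ac)
    also have "r * r powr (e - 1) = r powr e"
      using r by (simp add: powr_diff)
    finally show ?thesis by (simp add: scaled_flux_def F_def e_def)
  qed
  moreover have "r * (F * r powr e * (- real k * u r powr (- real k - 1) * deriv u r))
      = real k * scaled_flux r * log_slope r"
    using r u by (simp add: scaled_flux_def log_slope_def F_def e_def powr_diff field_simps)
  ultimately show ?thesis
    using r by (intro DERIV_cong[OF d]) (simp add: e_def field_simps)
qed

lemma two_k_minus_n_add_k_mult: "2 * real k - real n + real k * \<gamma> = - (real k * (beta - \<gamma>))"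
  using k_mult_beta by (simp add: algebra_simps)

lemma scaled_flux_stays_below:
  assumes "0 < a" "0 < \<gamma>" "a \<le> t"
    and neg: "\<And>t. a \<le> t \<Longrightarrow> deriv u t < 0"
    and small: "\<And>t. a \<le> t \<Longrightarrow> forcing t < real k * (beta - \<gamma>) * \<gamma> ^ k"
    and "scaled_flux a \<le> \<gamma> ^ k"
  shows "scaled_flux t \<le> \<gamma> ^ k"
proof -
  have "(scaled_flux has_real_derivative (forcing s + (2 * real k - real n) * scaled_flux s
    + real k * scaled_flux s * log_slope s) / s) (at s)" if "a \<le> s" for s
    by (rule has_real_derivative_scaled_flux) (use assms(1) that in simp)
  then show ?thesis
  proof (rule DERIV_neg_at_level_imp_le)
    fix s assume s: "a \<le> s" and level: "scaled_flux s = \<gamma> ^ k"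
    with assms(1) have "0 < s" by simp
    have "log_slope s ^ k = \<gamma> ^ k"
      using level scaled_flux_eq_log_slope_power[OF \<open>0 < s\<close> neg[OF s]] by simp
    then have "log_slope s = \<gamma>"
      using log_slope_pos[OF \<open>0 < s\<close> neg[OF s]] assms(2) k_gt_1
      by (auto intro: power_eq_imp_eq_base)
    then have "forcing s + (2 * real k - real n) * scaled_flux s + real k * scaled_flux s * log_slope s
        = forcing s + (2 * real k - real n + real k * \<gamma>) * \<gamma> ^ k"
      using level by (simp add: algebra_simps)
    also have "\<dots> = forcing s - real k * (beta - \<gamma>) * \<gamma> ^ k"
      by (simp add: two_k_minus_n_add_k_mult)
    also have "\<dots> < 0" using small[OF s] by simp
    finally show "(forcing s + (2 * real k - real n) * scaled_flux s
        + real k * scaled_flux s * log_slope s) / s < 0"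
      using \<open>0 < s\<close> by (simp add: divide_neg_pos)
  qed (use assms in auto)
qed

lemma scaled_flux_eventually_small:
  assumes "0 < a" "\<gamma> < beta" "0 < \<eta>"
    and neg: "\<And>t. a \<le> t \<Longrightarrow> deriv u t < 0"
    and forcing_le: "\<And>t. a \<le> t \<Longrightarrow> forcing t \<le> \<eta>"
    and slope_le: "\<And>t. a \<le> t \<Longrightarrow> log_slope t \<le> \<gamma>"
  shows "\<forall>\<^sub>F t in at_top. scaled_flux t < 2 * \<eta> / (real k * (beta - \<gamma>))"
proof -
  define d where "d = real k * (beta - \<gamma>)"
  define z where "z = \<eta> / d"
  have d: "0 < d" using assms(2) k_gt_1 by (simp add: d_def)
  have z: "0 < z" using d assms(3) by (simp add: z_def)
  have "d * z = \<eta>" using d by (simp add: z_def)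
  \<comment> \<open>since t Z' \<le> \<eta> - d Z, the function (Z - z) t^d is nonincreasing\<close>
  have decr: "(scaled_flux t - z) * t powr d \<le> (scaled_flux a - z) * a powr d" if "a \<le> t" for t
  proof (rule DERIV_nonpos_imp_nonincreasing[OF that])
    fix s assume s: "a \<le> s"
    with assms(1) have "0 < s" by simp
    let ?Z = "scaled_flux s" and ?Q = "log_slope s"
    have "0 \<le> ?Z"
      using scaled_flux_eq_log_slope_power[OF \<open>0 < s\<close> neg[OF s]] log_slope_pos[OF \<open>0 < s\<close> neg[OF s]]
      by simp
    then have "?Z * (2 * real k - real n + real k * ?Q) \<le> ?Z * (2 * real k - real n + real k * \<gamma>)"
      using slope_le[OF s] by (intro mult_left_mono) (auto intro: mult_left_mono)
    also have "\<dots> = - d * ?Z"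
      using two_k_minus_n_add_k_mult[of \<gamma>] by (simp add: d_def)
    finally have "d * (?Z - z) + (forcing s + (2 * real k - real n) * ?Z + real k * ?Z * ?Q) \<le> 0"
      using forcing_le[OF s] \<open>d * z = \<eta>\<close> by (simp add: algebra_simps)
    then have "s powr (d - 1) * (d * (?Z - z) + s * ((forcing s + (2 * real k - real n) * ?Z
        + real k * ?Z * ?Q) / s)) \<le> 0"
      using \<open>0 < s\<close> by (simp add: mult_nonneg_nonpos)
    moreover have "((\<lambda>t. (scaled_flux t - z) * t powr d) has_real_derivative s powr (d - 1) *
        (d * (?Z - z) + s * ((forcing s + (2 * real k - real n) * ?Z + real k * ?Z * ?Q) / s - 0))) (at s)"
      using has_real_derivative_mult_powr[OF \<open>0 < s\<close>
          DERIV_diff[OF has_real_derivative_scaled_flux[OF \<open>0 < s\<close>] DERIV_const[of z]], of d] .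
    ultimately show "\<exists>y. ((\<lambda>t. (scaled_flux t - z) * t powr d) has_real_derivative y) (at s) \<and> y \<le> 0"
      by (intro exI conjI) simp_all
  qed
  have "((\<lambda>t. (scaled_flux a - z) * a powr d * t powr (- d))
      \<longlongrightarrow> (scaled_flux a - z) * a powr d * 0) at_top"
    using d by (intro tendsto_mult tendsto_const tendsto_neg_powr filterlim_ident) simp
  then have "\<forall>\<^sub>F t in at_top. (scaled_flux a - z) * a powr d * t powr (- d) < z"
    using z by (simp add: order_tendstoD)
  then show ?thesis using eventually_ge_at_top[of a]
  proof eventually_elim
    case (elim t)
    with assms(1) have "0 < t" by simp
    have "scaled_flux t - z \<le> (scaled_flux a - z) * a powr d / t powr d"
      using decr[OF elim(2)] \<open>0 < t\<close> by (simp add: pos_le_divide_eq)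
    also have "\<dots> = (scaled_flux a - z) * a powr d * t powr (- d)"
      by (simp add: powr_minus divide_inverse)
    finally have "scaled_flux t - z \<le> (scaled_flux a - z) * a powr d * t powr (- d)" .
    then show ?case using elim(1) by (simp add: z_def d_def)
  qed
qed

lemma not_eventually_log_slope_less_alpha: "\<not> (\<forall>\<^sub>F t in at_top. log_slope t < alpha)"
proof
  assume "\<forall>\<^sub>F t in at_top. log_slope t < alpha"
  then have "\<forall>\<^sub>F t in at_top. ((\<lambda>t. u t * t powr alpha) has_real_derivative
      t powr (alpha - 1) * u t * (alpha - log_slope t)) (at t)
      \<and> 0 \<le> t powr (alpha - 1) * u t * (alpha - log_slope t)"
    using eventually_gt_at_top[of 0]
    by eventually_elim (simp add: has_real_derivative_u_mult_powr u_pos less_imp_le)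
  moreover have "\<forall>\<^sub>F t in at_top. 0 < u t * t powr alpha"
    using eventually_gt_at_top[of 0] by eventually_elim (simp add: u_pos)
  ultimately show False
    using DERIV_nonneg_imp_not_tendsto_0 decay by (force simp: alpha_def)
qed

lemma log_slope_le_imp_eventually_less_alpha:
  assumes "alpha < \<gamma>" "\<gamma> < beta" "0 < a"
    and neg: "\<And>t. a \<le> t \<Longrightarrow> deriv u t < 0"
    and forcing_less: "\<And>t. a \<le> t \<Longrightarrow> forcing t < real k * (beta - \<gamma>) * alpha ^ k / 4"
    and "log_slope a \<le> \<gamma>"
  shows "\<forall>\<^sub>F t in at_top. log_slope t < alpha"
proof -
  define \<eta> where "\<eta> = real k * (beta - \<gamma>) * alpha ^ k / 4"
  have \<gamma>: "0 < \<gamma>" using alpha_pos assms(1) by simp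
  have \<eta>: "0 < \<eta>" using k_gt_1 assms(2) alpha_pos by (simp add: \<eta>_def)
  have "alpha ^ k < \<gamma> ^ k"
    using alpha_pos assms(1) k_gt_1 by (intro power_strict_mono) auto
  then have "\<eta> < real k * (beta - \<gamma>) * \<gamma> ^ k"
    using k_gt_1 assms(2) alpha_pos zero_less_power[OF \<gamma>, of k] by (simp add: \<eta>_def)
  then have "forcing t < real k * (beta - \<gamma>) * \<gamma> ^ k" if "a \<le> t" for t
    using forcing_less[OF that] by (simp add: \<eta>_def)
  moreover have "scaled_flux a \<le> \<gamma> ^ k"
    using assms(6) log_slope_pos[OF assms(3) neg] scaled_flux_eq_log_slope_power[OF assms(3) neg]
      \<gamma> k_gt_1 by simp
  ultimately have below: "scaled_flux t \<le> \<gamma> ^ k" if "a \<le> t" for t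
    using scaled_flux_stays_below[OF assms(3) \<gamma> that neg] by blast
  have slope_le: "log_slope t \<le> \<gamma>" if "a \<le> t" for t
  proof -
    have "0 < t" using assms(3) that by simp
    then have "log_slope t ^ k \<le> \<gamma> ^ k"
      using below[OF that] scaled_flux_eq_log_slope_power[OF _ neg[OF that]] by simp
    then show ?thesis
      using log_slope_pos[OF \<open>0 < t\<close> neg[OF that]] \<gamma> k_gt_1 by simp
  qed
  have "forcing t \<le> \<eta>" if "a \<le> t" for t
    using forcing_less[OF that] by (simp add: \<eta>_def)
  then have "\<forall>\<^sub>F t in at_top. scaled_flux t < 2 * \<eta> / (real k * (beta - \<gamma>))"
    using scaled_flux_eventually_small[OF assms(3,2) \<eta> neg _ slope_le] by blast
  moreover have "2 * \<eta> / (real k * (beta - \<gamma>)) = alpha ^ k / 2"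
    using k_gt_1 assms(2) by (simp add: \<eta>_def field_simps)
  ultimately have "\<forall>\<^sub>F t in at_top. scaled_flux t < alpha ^ k / 2" by simp
  then show ?thesis
    using eventually_ge_at_top[of a]
  proof eventually_elim
    case (elim t)
    with assms(3) have "0 < t" by simp
    then have "0 < log_slope t ^ k" "scaled_flux t = log_slope t ^ k"
      using log_slope_pos[OF _ neg[OF elim(2)]] scaled_flux_eq_log_slope_power[OF _ neg[OF elim(2)]]
      by simp_all
    then have "log_slope t ^ k < alpha ^ k"
      using elim(1) by simp
    then show ?case by (rule power_less_imp_less_base) (simp add: less_imp_le alpha_pos)
  qed
qed

lemma eventually_log_slope_gt:
  assumes "alpha < \<gamma>" "\<gamma> < beta"
  shows "\<forall>\<^sub>F r in at_top. \<gamma> < log_slope r"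
proof -
  have pos: "0 < real k * (beta - \<gamma>) * alpha ^ k / 4"
    using k_gt_1 assms(2) alpha_pos by simp
  have "\<forall>\<^sub>F r in at_top.
      0 < r \<and> deriv u r < 0 \<and> forcing r < real k * (beta - \<gamma>) * alpha ^ k / 4"
    using eventually_gt_at_top[of 0] eventually_deriv_neg order_tendstoD(2)[OF forcing_tendsto_0 pos]
    by eventually_elim auto
  then obtain R where R: "\<And>r. R \<le> r \<Longrightarrow>
      0 < r \<and> deriv u r < 0 \<and> forcing r < real k * (beta - \<gamma>) * alpha ^ k / 4"
    by (auto simp: eventually_at_top_linorder)
  show ?thesis using eventually_ge_at_top[of R]
  proof eventually_elim
    case (elim a)
    have a: "0 < a" using R[OF elim] by simp
    have "deriv u t < 0" "forcing t < real k * (beta - \<gamma>) * alpha ^ k / 4" if "a \<le> t" for t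
      using R[of t] elim that by simp_all
    then have "log_slope a \<le> \<gamma> \<Longrightarrow> \<forall>\<^sub>F t in at_top. log_slope t < alpha"
      using log_slope_le_imp_eventually_less_alpha[OF assms a] by blast
    then show "\<gamma> < log_slope a"
      using not_eventually_log_slope_less_alpha by fastforce
  qed
qed

lemma eventually_u_le_powr:
  assumes "alpha < \<gamma>" "\<gamma> < beta"
  shows "\<exists>C. \<forall>\<^sub>F r in at_top. u r \<le> C * r powr (- \<gamma>)"
proof -
  obtain R where R: "\<And>r. R \<le> r \<Longrightarrow> 0 < r \<and> \<gamma> < log_slope r"
    using eventually_conj[OF eventually_gt_at_top[of 0] eventually_log_slope_gt[OF assms]]
    by (auto simp: eventually_at_top_linorder)
  have decr: "u r * r powr \<gamma> \<le> u R * R powr \<gamma>" if "R \<le> r" for r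
  proof (rule DERIV_nonpos_imp_nonincreasing[OF that])
    fix s assume "R \<le> s"
    with R have "0 < s" "\<gamma> < log_slope s" by auto
    moreover have "0 \<le> s powr (\<gamma> - 1) * u s" using u_pos[OF \<open>0 < s\<close>] by simp
    ultimately show "\<exists>y. ((\<lambda>t. u t * t powr \<gamma>) has_real_derivative y) (at s) \<and> y \<le> 0"
      using has_real_derivative_u_mult_powr[of s \<gamma>] by (intro exI conjI) (auto intro: mult_nonneg_nonpos)
  qed
  have "\<forall>\<^sub>F r in at_top. u r \<le> u R * R powr \<gamma> * r powr (- \<gamma>)"
    using eventually_ge_at_top[of R]
  proof eventually_elim
    case (elim r)
    with R have "0 < r" by blast
    then have "u r \<le> u R * R powr \<gamma> / r powr \<gamma>"
      using decr[OF elim] by (simp add: pos_le_divide_eq)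
    then show ?case by (simp add: powr_minus divide_inverse)
  qed
  then show ?thesis by blast
qed

lemma flux_growth_le:
  assumes "0 < x" "0 < C" "u x \<le> C * x powr (- \<gamma>)"
  shows "c * x ^ (n - 1) * u x powr p \<le> c * C powr p * x powr (real n - p * \<gamma> - 1)"
proof -
  have "u x powr p \<le> (C * x powr (- \<gamma>)) powr p"
    using assms(3) u_pos[OF assms(1)] p_pos by (intro powr_mono2) auto
  also have "\<dots> = C powr p * x powr (- \<gamma> * p)"
    using assms(1,2) by (simp add: powr_mult powr_powr)
  finally have "c * x powr (real n - 1) * u x powr p
      \<le> c * x powr (real n - 1) * (C powr p * x powr (- \<gamma> * p))"
    using c_pos by (simp add: mult_left_mono)
  also have "\<dots> = c * C powr p * x powr (real n - p * \<gamma> - 1)"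
    by (simp add: powr_add[symmetric] algebra_simps)
  also have "x powr (real n - 1) = x ^ (n - 1)"
    using assms(1) two_k_less_n by (simp flip: powr_realpow)
  finally show ?thesis .
qed

lemma eventually_neg_radial_flux_le:
  assumes "real n < p * \<gamma>" and "\<forall>\<^sub>F r in at_top. u r \<le> C * r powr (- \<gamma>)"
  shows "\<exists>B. \<forall>\<^sub>F r in at_top. - radial_flux n k u r \<le> B"
proof -
  obtain R where R: "\<And>r. R \<le> r \<Longrightarrow> 0 < r \<and> u r \<le> C * r powr (- \<gamma>)"
    using eventually_conj[OF eventually_gt_at_top[of 0] assms(2)]
    by (auto simp: eventually_at_top_linorder)
  define e where "e = real n - p * \<gamma>"
  define A where "A = c * C powr p"
  have e: "e < 0" using assms(1) by (simp add: e_def)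
  have "0 < C * R powr (- \<gamma>)" using R[of R] u_pos[of R] by force
  then have C: "0 < C" using R[of R] by (simp add: zero_less_mult_iff)
  have diff: "- radial_flux n k u r - - radial_flux n k u R \<le> A / e * r powr e - A / e * R powr e"
    if "R \<le> r" for r
  proof (rule DERIV_le_imp_diff_le[OF that])
    fix x assume "R \<le> x"
    with R have x: "0 < x" "u x \<le> C * x powr (- \<gamma>)" by auto
    show "((\<lambda>t. - radial_flux n k u t) has_real_derivative c * x ^ (n - 1) * u x powr p) (at x)"
      using DERIV_minus[OF flux_deriv[OF x(1)]] by simp
    show "((\<lambda>t. A / e * t powr e) has_real_derivative A / e * (e * x powr (e - 1))) (at x)"
      using x(1) by (intro DERIV_cmult has_real_derivative_powr)
    show "c * x ^ (n - 1) * u x powr p \<le> A / e * (e * x powr (e - 1))"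
      using flux_growth_le[OF x(1) C x(2)] e by (simp add: A_def e_def)
  qed
  have "A / e \<le> 0" using e c_pos C by (simp add: A_def divide_nonneg_neg)
  then have bound: "- radial_flux n k u r \<le> - radial_flux n k u R - A / e * R powr e"
    if "R \<le> r" for r
    using diff[OF that] mult_nonpos_nonneg[of "A / e" "r powr e"] by simp
  have "\<forall>\<^sub>F r in at_top. - radial_flux n k u r \<le> - radial_flux n k u R - A / e * R powr e"
    using eventually_ge_at_top[of R] by (rule eventually_mono) (rule bound)
  then show ?thesis by blast
qed

lemma eventually_neg_deriv_le:
  assumes "\<forall>\<^sub>F r in at_top. - radial_flux n k u r \<le> B"
  shows "\<exists>D. \<forall>\<^sub>F r in at_top. - deriv u r \<le> D * r powr (- (beta + 1))"
proof -
  define D where "D = B powr (1 / real k)"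
  have "\<forall>\<^sub>F r in at_top. - deriv u r \<le> D * r powr (- (beta + 1))"
    using eventually_gt_at_top[of 0] eventually_deriv_neg assms
  proof eventually_elim
    case (elim r)
    have flux: "- radial_flux n k u r = r ^ (n - k) * (- deriv u r) ^ k"
      using neg_radial_flux_eq[OF elim(2)] .
    have "0 < r ^ (n - k) * (- deriv u r) ^ k" using elim(1,2) by simp
    then have B: "0 < B" using elim(3) flux by linarith
    have "r powr (- (beta + 1) * real k) = 1 / r ^ (n - k)"
    proof -
      have "- (beta + 1) * real k = - real (n - k)"
        using k_mult_beta two_k_less_n by (simp add: algebra_simps)
      then show ?thesis using elim(1) by (simp add: powr_minus powr_realpow divide_inverse)
    qed
    then have "(D * r powr (- (beta + 1))) ^ k = B / r ^ (n - k)"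
      using B elim(1) k_gt_1
      by (simp add: D_def power_mult_distrib powr_power powr_powr mult.commute divide_inverse)
    moreover have "(- deriv u r) ^ k \<le> B / r ^ (n - k)"
      using elim flux by (simp add: pos_le_divide_eq mult.commute)
    ultimately have "(- deriv u r) ^ k \<le> (D * r powr (- (beta + 1))) ^ k" by simp
    then show ?case
      using elim(2) k_gt_1 by (simp add: D_def)
  qed
  then show ?thesis by blast
qed

theorem u_bigo: "u \<in> O[at_top](\<lambda>r. r powr (- beta))"
proof -
  define \<gamma> where "\<gamma> = (beta + real n / p) / 2"
  have \<gamma>: "alpha < \<gamma>" "\<gamma> < beta" "real n < p * \<gamma>"
    using alpha_less less_beta p_pos by (auto simp: \<gamma>_def field_simps)
  obtain C where "\<forall>\<^sub>F r in at_top. u r \<le> C * r powr (- \<gamma>)"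
    using eventually_u_le_powr[OF \<gamma>(1,2)] by blast
  then obtain B where "\<forall>\<^sub>F r in at_top. - radial_flux n k u r \<le> B"
    using eventually_neg_radial_flux_le[OF \<gamma>(3)] by blast
  then obtain D where "\<forall>\<^sub>F r in at_top. - deriv u r \<le> D * r powr (- (beta + 1))"
    using eventually_neg_deriv_le by blast
  then have "\<forall>\<^sub>F r in at_top. 0 < r \<and> - deriv u r \<le> D * r powr (- (beta + 1))"
    using eventually_gt_at_top[of 0] by eventually_elim simp
  then obtain R where R: "\<And>r. R \<le> r \<Longrightarrow> 0 < r \<and> - deriv u r \<le> D * r powr (- (beta + 1))"
    by (auto simp: eventually_at_top_linorder)
  have bound: "u r \<le> D / beta * r powr (- beta)" if "R \<le> r" for r
  proof (rule DERIV_ge_same_limit_imp_le[where f = u and f' = "deriv u"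
        and g = "\<lambda>t. D / beta * t powr (- beta)"
        and g' = "\<lambda>t. D / beta * (- beta * t powr (- beta - 1))" and L = 0])
    fix x assume "r \<le> x"
    with R that have x: "0 < x" "- deriv u x \<le> D * x powr (- (beta + 1))" by auto
    show "(u has_real_derivative deriv u x) (at x)" using u_deriv[OF x(1)] .
    show "((\<lambda>t. D / beta * t powr (- beta)) has_real_derivative
        D / beta * (- beta * x powr (- beta - 1))) (at x)"
      using x(1) by (intro DERIV_cmult has_real_derivative_powr)
    have "- beta - 1 = - (beta + 1)" by simp
    then show "D / beta * (- beta * x powr (- beta - 1)) \<le> deriv u x"
      using x(2) beta_pos by (simp only:) simp
  next
    show "(u \<longlongrightarrow> 0) at_top" by (rule u_tendsto_0)
    show "((\<lambda>t. D / beta * t powr (- beta)) \<longlongrightarrow> 0) at_top"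
    proof -
      have "((\<lambda>t. t powr (- beta)) \<longlongrightarrow> 0) at_top"
        using beta_pos by (intro tendsto_neg_powr filterlim_ident) simp
      from tendsto_mult[OF tendsto_const this, of "D / beta"] show ?thesis by simp
    qed
  qed
  have "\<forall>\<^sub>F r in at_top. norm (u r) \<le> D / beta * norm (r powr (- beta))"
    using eventually_ge_at_top[of R]
  proof eventually_elim
    case (elim r)
    with R have "0 < r" by blast
    then show ?case using bound[OF elim] u_pos[of r] by simp
  qed
  then show ?thesis by (rule bigoI)
qed

end

lemma problem_1_6_supercritical_radial_solution:
  assumes "problem_1_6 n k p \<rho> u" and "1 < k" and "2 * k < n"
    and "real n * real k < p * (real n - 2 * real k)"
    and "((\<lambda>r. u r * r powr (2 * real k / (p - real k))) \<longlongrightarrow> 0) at_top"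
  shows "supercritical_radial_solution n k p (real k / real ((n - 1) choose (k - 1))) u"
proof unfold_locales
  define b where "b = real ((n - 1) choose (k - 1))"
  have b: "0 < b" using assms(2,3) by (simp add: b_def)
  show "0 < real k / real ((n - 1) choose (k - 1))"
    using b assms(2) by (simp add: b_def)
  fix r :: real assume r: "0 < r"
  show "0 < u r" using assms(1) r by (simp add: problem_1_6_def)
  show "(u has_real_derivative deriv u r) (at r)"
    using assms(1) r by (simp add: problem_1_6_def DERIV_deriv_iff_real_differentiable)
  obtain D where D: "(radial_flux n k u has_real_derivative D) (at r)"
      "- (1 / real k) * b * D = r ^ (n - 1) * u r powr p"
    using assms(1) r by (auto simp: problem_1_6_def radial_flux_def[abs_def] b_def)
  then have "D = - (real k / b * r ^ (n - 1) * u r powr p)"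
    using b assms(2) by (simp add: field_simps)
  with D(1) show "(radial_flux n k u has_real_derivative
      - (real k / real ((n - 1) choose (k - 1)) * r ^ (n - 1) * u r powr p)) (at r)"
    by (simp add: b_def)
qed (use assms in auto)

theorem lemma2p3:
  fixes u :: "real \<Rightarrow> real" and k :: nat and p \<rho> :: real
  assumes "CARD('n::finite) \<ge> 3"
    and "1 < k" and "2 * k < CARD('n)"
    and "p > real (CARD('n) * k) / real (CARD('n) - 2 * k)"
    and "\<rho> > 0"
    and "regular_solution_1_6 TYPE('n) k p \<rho> u"
    and "((\<lambda>r. u r * r powr (2 * real k / (p - real k))) \<longlongrightarrow> 0) at_top"
  shows "u \<in> O[at_top](\<lambda>r. r powr ((2 * real k - real CARD('n)) / real k))"
proof -
  have "0 < real CARD('n) - 2 * real k" using assms(3) by linarith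
  moreover have "real (CARD('n) - 2 * k) = real CARD('n) - 2 * real k" using assms(3) by simp
  ultimately have "real CARD('n) * real k < p * (real CARD('n) - 2 * real k)"
    using assms(4) by (simp add: divide_less_eq mult.commute)
  moreover have "problem_1_6 CARD('n) k p \<rho> u"
    using assms(6) by (simp add: regular_solution_1_6_def)
  ultimately have "supercritical_radial_solution CARD('n) k p
      (real k / real ((CARD('n) - 1) choose (k - 1))) u"
    using assms(2,3,7) by (intro problem_1_6_supercritical_radial_solution)
  then interpret supercritical_radial_solution "CARD('n)" k p
      "real k / real ((CARD('n) - 1) choose (k - 1))" u .
  have "(2 * real k - real CARD('n)) / real k = - beta"
    by (simp add: beta_def minus_divide_left)
  then show ?thesis using u_bigo by simp
qed

end
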